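(* For $H\in[0,1]$ let $\rho_1(H)=2^{2H-1}-1$, $\rho_2(H)=\frac12\left(3^{2H}-2^{2H+1}+1\right)$ and $$\det\Sigma_3(H)=\det\begin{pmatrix}1&\rho_1(H)&\rho_2(H)\\ \rho_1(H)&1&\rho_1(H)\\ \rho_2(H)&\rho_1(H)&1\end{pmatrix}=1+2\rho_1(H)^2\rho_2(H)-\rho_2(H)^2-2\rho_1(H)^2 .$$ Then $\det\Sigma_3(H)$ increases from $\frac12$ to $1$ as $H$ increases from $0$ to $\frac12$, and decreases from $1$ to $0$ as $H$ increases from $\frac12$ to $1$. Consequently, $\log(\det\Sigma_3(H))$ increases from $-\log 2$ to $0$ as $H$ increases from $0$ to $\frac12$, and decreases from $0$ to $-\infty$ as $H$ increases from $\frac12$ to $1$.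
   Context: $\Sigma_3(H)$ is the covariance matrix of $(G^H_1,G^H_2,G^H_3)$, where $G^H_k=B^H_k-B^H_{k-1}$ is fractional Gaussian noise built from a fractional Brownian motion with Hurst index $H$; the autocovariances are $\rho_k(H)=\frac12((k+1)^{2H}-2k^{2H}+(k-1)^{2H})$, and the explicit formulas for $\rho_1,\rho_2$ above are used also at $H=0,1$. Logarithms are natural, with $\log 0=-\infty$. *)

theory Defs
  imports "HOL-Analysis.Analysis"
begin

definition rho1 :: "real \<Rightarrow> real" where
  "rho1 H = 2 powr (2*H - 1) - 1"

definition rho2 :: "real \<Rightarrow> real" where
  "rho2 H = (3 powr (2*H) - 2 powr (2*H + 1) + 1) / 2"

definition Sigma3 :: "real \<Rightarrow> real^3^3" where
  "Sigma3 H = (\<chi> i j. if i = j then 1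
                        else if (i = 1 \<and> j = 3) \<or> (i = 3 \<and> j = 1) then rho2 H
                        else rho1 H)"

definition detSigma3 :: "real \<Rightarrow> real" where
  "detSigma3 H = 1 + 2 * (rho1 H)^2 * rho2 H - (rho2 H)^2 - 2 * (rho1 H)^2"

definition logext :: "real \<Rightarrow> ereal" where
  "logext x = (if x \<le> 0 then -\<infinity> else ereal (ln x))"

end

theory Submission imports Defs begin

text \<open>
  With a = 4 powr H and b = 9 powr H one has rho1 H = a/2 - 1 and rho2 H = (b - 2a + 1)/2,
  so detSigma3 is a polynomial in a and b, with derivative
    ln 2 * a^2 * (3 - 3a + b) + ln 3 * b * (2 - 2b + a^2) / 2.
  Both brackets vanish at H = 1/2 and H = 1, and after division by a resp. b each is a
  positive combination of two exponentials in H minus a constant, hence strictly convex.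
  So both are positive for H < 1/2 and negative for 1/2 < H < 1, which gives the
  monotonicity. The claims about the logarithm follow because ln is strictly increasing
  and on [0, 1] the determinant vanishes only at H = 1.
\<close>

lemma powr_gt_tangent:
  fixes c s t :: real
  assumes "0 < c" "c \<noteq> 1" "s \<noteq> t"
  shows "c powr t * (1 + ln c * (s - t)) < c powr s"
proof -
  have "ln c * (s - t) \<noteq> 0"
    using assms by simp
  then have "1 + ln c * (s - t) < exp (ln c * (s - t))"
    using exp_minus_greater[of "- (ln c * (s - t))"] by simp
  then have "c powr t * (1 + ln c * (s - t)) < c powr t * exp (ln c * (s - t))"
    using assms by simp
  also have "\<dots> = c powr s"
    using assms by (simp add: powr_def algebra_simps flip: exp_add)
  finally show ?thesis .
qed

lemma above_strict_tangents_level_sign: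
  fixes f f' :: "real \<Rightarrow> real"
  assumes tangent: "\<And>s t. s \<noteq> t \<Longrightarrow> f t + f' t * (s - t) < f s"
    and "p < q" "f p = K" "f q = K"
  shows "t < p \<Longrightarrow> K < f t"
    and "p < t \<Longrightarrow> t < q \<Longrightarrow> f t < K"
proof -
  assume "t < p"
  have "f' p * (q - p) < 0"
    using tangent[of q p] assms by simp
  then have "0 < f' p * (t - p)"
    using \<open>p < q\<close> \<open>t < p\<close> by (simp add: mult_less_0_iff zero_less_mult_iff)
  then show "K < f t"
    using tangent[of t p] \<open>t < p\<close> \<open>f p = K\<close> by simp
next
  assume "p < t" "t < q"
  have "(q - t) * (f t + f' t * (p - t)) < (q - t) * K"
    using tangent[of p t] \<open>p < t\<close> \<open>t < q\<close> \<open>f p = K\<close> by (intro mult_strict_left_mono) auto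
  moreover have "(t - p) * (f t + f' t * (q - t)) < (t - p) * K"
    using tangent[of q t] \<open>p < t\<close> \<open>t < q\<close> \<open>f q = K\<close> by (intro mult_strict_left_mono) auto
  ultimately have "(q - p) * f t < (q - p) * K"
    by (simp add: algebra_simps)
  then show "f t < K"
    using \<open>p < q\<close> by simp
qed

lemma two_exponentials_level_sign:
  fixes \<alpha> \<beta> c d p q K t :: real
  assumes "0 < \<alpha>" "0 < \<beta>" "0 < c" "0 < d" "c \<noteq> 1" "d \<noteq> 1" "p < q"
    and "\<alpha> * c powr p + \<beta> * d powr p = K" "\<alpha> * c powr q + \<beta> * d powr q = K"
  shows "t < p \<Longrightarrow> K < \<alpha> * c powr t + \<beta> * d powr t"
    and "p < t \<Longrightarrow> t < q \<Longrightarrow> \<alpha> * c powr t + \<beta> * d powr t < K"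
proof -
  have tangent: "(\<alpha> * c powr t + \<beta> * d powr t)
      + (\<alpha> * ln c * c powr t + \<beta> * ln d * d powr t) * (s - t)
      < \<alpha> * c powr s + \<beta> * d powr s" if "s \<noteq> t" for s t
  proof -
    have "\<alpha> * (c powr t * (1 + ln c * (s - t))) < \<alpha> * c powr s"
      using powr_gt_tangent[of c s t] assms that by simp
    moreover have "\<beta> * (d powr t * (1 + ln d * (s - t))) < \<beta> * d powr s"
      using powr_gt_tangent[of d s t] assms that by simp
    ultimately show ?thesis
      by (simp add: algebra_simps)
  qed
  note level = above_strict_tangents_level_sign[OF tangent \<open>p < q\<close> assms(8,9)]
  show "t < p \<Longrightarrow> K < \<alpha> * c powr t + \<beta> * d powr t"
    by (rule level(1))
  show "p < t \<Longrightarrow> t < q \<Longrightarrow> \<alpha> * c powr t + \<beta> * d powr t < K"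
    by (rule level(2))
qed

lemma sign_3_minus_3_4_powr_plus_9_powr:
  fixes H :: real
  shows "H < 1/2 \<Longrightarrow> 0 < 3 - 3 * 4 powr H + 9 powr H"
    and "1/2 < H \<Longrightarrow> H < 1 \<Longrightarrow> 3 - 3 * 4 powr H + 9 powr H < 0"
proof -
  have factor:
    "3 - 3 * 4 powr H + 9 powr H = 4 powr H * ((3 * (1/4) powr H + 1 * (9/4) powr H) - 3)"
    by (simp add: powr_divide field_simps)
  have "3 * (1/4) powr (1/2) + 1 * (9/4) powr (1/2) = (3::real)"
    by (simp add: powr_half_sqrt real_sqrt_divide)
  note level = two_exponentials_level_sign[OF _ _ _ _ _ _ _ this, where q = 1]
  show "H < 1/2 \<Longrightarrow> 0 < 3 - 3 * 4 powr H + 9 powr H"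
    unfolding factor using level(1)[of H] by simp
  show "1/2 < H \<Longrightarrow> H < 1 \<Longrightarrow> 3 - 3 * 4 powr H + 9 powr H < 0"
    unfolding factor using level(2)[of H] by (simp add: mult_pos_neg)
qed

lemma sign_2_minus_2_9_powr_plus_16_powr:
  fixes H :: real
  shows "H < 1/2 \<Longrightarrow> 0 < 2 - 2 * 9 powr H + 16 powr H"
    and "1/2 < H \<Longrightarrow> H < 1 \<Longrightarrow> 2 - 2 * 9 powr H + 16 powr H < 0"
proof -
  have factor:
    "2 - 2 * 9 powr H + 16 powr H = 9 powr H * ((2 * (1/9) powr H + 1 * (16/9) powr H) - 2)"
    by (simp add: powr_divide field_simps)
  have "2 * (1/9) powr (1/2) + 1 * (16/9) powr (1/2) = (2::real)"
    by (simp add: powr_half_sqrt real_sqrt_divide)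
  note level = two_exponentials_level_sign[OF _ _ _ _ _ _ _ this, where q = 1]
  show "H < 1/2 \<Longrightarrow> 0 < 2 - 2 * 9 powr H + 16 powr H"
    unfolding factor using level(1)[of H] by simp
  show "1/2 < H \<Longrightarrow> H < 1 \<Longrightarrow> 2 - 2 * 9 powr H + 16 powr H < 0"
    unfolding factor using level(2)[of H] by (simp add: mult_pos_neg)
qed

lemma detSigma3_eq_powr:
  "detSigma3 H = (-1 + 2 * 9 powr H + 3 * (4 powr H)\<^sup>2 - 2 * (4 powr H)^3
                  - (9 powr H)\<^sup>2 + (4 powr H)\<^sup>2 * 9 powr H) / 4"
proof -
  have powr_2H: "2 powr (2*H - 1) = 4 powr H / 2" "2 powr (2*H + 1) = 4 powr H * 2"
      "3 powr (2*H) = 9 powr H"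
    by (simp_all add: powr_diff powr_add flip: powr_powr)
  show ?thesis
    unfolding detSigma3_def rho1_def rho2_def powr_2H
    by (simp add: power2_eq_square power3_eq_cube field_simps)
qed

definition detSigma3' :: "real \<Rightarrow> real" where
  "detSigma3' H = ln 2 * (4 powr H)\<^sup>2 * (3 - 3 * 4 powr H + 9 powr H)
                  + ln 3 * 9 powr H * (2 - 2 * 9 powr H + 16 powr H) / 2"

lemma has_real_derivative_detSigma3: "(detSigma3 has_real_derivative detSigma3' H) (at H)"
proof -
  have ln_4: "ln 4 = 2 * ln (2::real)" and ln_9: "ln 9 = 2 * ln (3::real)"
    using ln_realpow[of 2 2] ln_realpow[of 3 2] by simp_all
  have "16 powr H = (4 powr H)\<^sup>2"
    by (simp add: power2_eq_square flip: powr_mult)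
  then show ?thesis
    unfolding detSigma3_eq_powr[abs_def] detSigma3'_def
    by (auto intro!: derivative_eq_intros
        simp: ln_4 ln_9 field_simps power2_eq_square power3_eq_cube)
qed

lemma detSigma3'_pos:
  assumes "H < 1/2"
  shows "0 < detSigma3' H"
proof -
  have "0 < 3 - 3 * 4 powr H + 9 powr H" "0 < 2 - 2 * 9 powr H + 16 powr H"
    using assms
    by (rule sign_3_minus_3_4_powr_plus_9_powr(1) sign_2_minus_2_9_powr_plus_16_powr(1))+
  then show ?thesis
    unfolding detSigma3'_def by (auto intro!: add_pos_pos mult_pos_pos divide_pos_pos)
qed

lemma detSigma3'_neg:
  assumes "1/2 < H" "H < 1"
  shows "detSigma3' H < 0"
proof -
  have "3 - 3 * 4 powr H + 9 powr H < 0" "2 - 2 * 9 powr H + 16 powr H < 0"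
    using assms
    by (rule sign_3_minus_3_4_powr_plus_9_powr(2) sign_2_minus_2_9_powr_plus_16_powr(2))+
  then show ?thesis
    unfolding detSigma3'_def by (auto intro!: add_neg_neg mult_pos_neg divide_neg_pos)
qed

lemma detSigma3_values: "detSigma3 0 = 1/2" "detSigma3 (1/2) = 1" "detSigma3 1 = 0"
  by (simp_all add: detSigma3_def rho1_def rho2_def power2_eq_square)

lemma det_Sigma3: "det (Sigma3 H) = detSigma3 H"
  unfolding det_3 Sigma3_def detSigma3_def by (simp add: power2_eq_square algebra_simps)

lemma continuous_on_detSigma3: "continuous_on A detSigma3"
  by (meson DERIV_isCont continuous_at_imp_continuous_on has_real_derivative_detSigma3)

lemma strict_mono_on_detSigma3: "strict_mono_on {0..1/2} detSigma3"
proof (rule strict_mono_onI)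
  fix x y :: real
  assume "x \<in> {0..1/2}" "y \<in> {0..1/2}" "x < y"
  show "detSigma3 x < detSigma3 y"
  proof (rule DERIV_pos_imp_increasing_open[OF \<open>x < y\<close> _ continuous_on_detSigma3])
    fix H assume "x < H" "H < y"
    then have "H < 1/2"
      using \<open>y \<in> {0..1/2}\<close> by simp
    then show "\<exists>D. DERIV detSigma3 H :> D \<and> 0 < D"
      using has_real_derivative_detSigma3 detSigma3'_pos by blast
  qed
qed

lemma strict_antimono_on_detSigma3: "strict_antimono_on {1/2..1} detSigma3"
proof (rule monotone_onI)
  fix x y :: real
  assume "x \<in> {1/2..1}" "y \<in> {1/2..1}" "x < y"
  show "detSigma3 y < detSigma3 x"
  proof (rule DERIV_neg_imp_decreasing_open[OF \<open>x < y\<close> _ continuous_on_detSigma3])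
    fix H assume "x < H" "H < y"
    then have "1/2 < H" "H < 1"
      using \<open>x \<in> {1/2..1}\<close> \<open>y \<in> {1/2..1}\<close> by simp_all
    then show "\<exists>D. DERIV detSigma3 H :> D \<and> D < 0"
      using has_real_derivative_detSigma3 detSigma3'_neg by blast
  qed
qed

lemma logext_strict_mono:
  assumes "0 < y" "x < y"
  shows "logext x < logext y"
  using assms by (simp add: logext_def)

lemma tendsto_logext_0:
  assumes "(f \<longlongrightarrow> 0) F"
  shows "((\<lambda>x. logext (f x)) \<longlongrightarrow> -\<infinity>) F"
  unfolding tendsto_MInfty
proof
  fix r :: real
  have "eventually (\<lambda>x. f x < exp r) F"
    using order_tendstoD(2)[OF assms] by simp
  then show "eventually (\<lambda>x. logext (f x) < ereal r) F"
  proof (rule eventually_mono)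
    fix x assume "f x < exp r"
    then show "logext (f x) < ereal r"
      using ln_less_cancel_iff[of "f x" "exp r"] by (simp add: logext_def)
  qed
qed

lemma strict_mono_on_logext_detSigma3: "strict_mono_on {0..1/2} (\<lambda>H. logext (detSigma3 H))"
proof (rule strict_mono_onI)
  fix x y :: real
  assume "x \<in> {0..1/2}" "y \<in> {0..1/2}" "x < y"
  then have "detSigma3 x < detSigma3 y" "detSigma3 0 < detSigma3 y"
    by (auto intro: strict_mono_onD[OF strict_mono_on_detSigma3])
  then show "logext (detSigma3 x) < logext (detSigma3 y)"
    by (simp add: logext_strict_mono detSigma3_values)
qed

lemma strict_antimono_on_logext_detSigma3:
  "strict_antimono_on {1/2..1} (\<lambda>H. logext (detSigma3 H))"
proof (rule monotone_onI)
  fix x y :: real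
  assume "x \<in> {1/2..1}" "y \<in> {1/2..1}" "x < y"
  then have "detSigma3 y < detSigma3 x" "detSigma3 1 < detSigma3 x"
    using monotone_onD[OF strict_antimono_on_detSigma3, of x y]
      monotone_onD[OF strict_antimono_on_detSigma3, of x 1] by auto
  then show "logext (detSigma3 y) < logext (detSigma3 x)"
    by (simp add: logext_strict_mono detSigma3_values)
qed

lemma tendsto_logext_detSigma3_at_left_1:
  "((\<lambda>H. logext (detSigma3 H)) \<longlongrightarrow> -\<infinity>) (at_left 1)"
proof (rule tendsto_logext_0)
  have "isCont detSigma3 1"
    by (rule DERIV_isCont[OF has_real_derivative_detSigma3])
  then show "(detSigma3 \<longlongrightarrow> 0) (at_left 1)"
    by (simp add: isCont_def filterlim_at_split flip: detSigma3_values(3))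
qed

theorem mainTheorem2:
  shows "(\<forall>H\<in>{0..1}. det (Sigma3 H) = detSigma3 H)
    \<and> detSigma3 0 = 1/2 \<and> detSigma3 (1/2) = 1 \<and> detSigma3 1 = 0
    \<and> (\<forall>x\<in>{0..1/2}. \<forall>y\<in>{0..1/2}. x < y \<longrightarrow> detSigma3 x < detSigma3 y)
    \<and> (\<forall>x\<in>{1/2..1}. \<forall>y\<in>{1/2..1}. x < y \<longrightarrow> detSigma3 y < detSigma3 x)
    \<and> logext (detSigma3 0) = - ereal (ln 2) \<and> logext (detSigma3 (1/2)) = 0
    \<and> logext (detSigma3 1) = -\<infinity>
    \<and> (\<forall>x\<in>{0..1/2}. \<forall>y\<in>{0..1/2}. x < y \<longrightarrow> logext (detSigma3 x) < logext (detSigma3 y))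
    \<and> (\<forall>x\<in>{1/2..1}. \<forall>y\<in>{1/2..1}. x < y \<longrightarrow> logext (detSigma3 y) < logext (detSigma3 x))
    \<and> ((\<lambda>H. logext (detSigma3 H)) \<longlongrightarrow> -\<infinity>) (at_left 1)"
proof -
  have "logext (detSigma3 0) = - ereal (ln 2)" "logext (detSigma3 (1/2)) = 0"
      "logext (detSigma3 1) = -\<infinity>"
    by (simp_all add: detSigma3_values logext_def ln_div)
  with det_Sigma3 detSigma3_values strict_mono_on_detSigma3 strict_antimono_on_detSigma3
    strict_mono_on_logext_detSigma3 strict_antimono_on_logext_detSigma3
    tendsto_logext_detSigma3_at_left_1
  show ?thesis
    unfolding monotone_on_def by simp
qed

end
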